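(* Let $2\le r\le n$, let $a_1,a_{r+1},\dots,a_n$ be distinct real numbers, and let $F(a)=(a-a_1)^r\hat F(a)$ with $\hat F(a)=\prod_{i=r+1}^n(a-a_i)$ ($\hat F=1$ if $r=n$). Fix signs $\epsilon_1,\epsilon_{r+1},\dots,\epsilon_n\in\{\pm1\}$, put $\Delta_i=\epsilon_i(a-a_i)$ and work on an open interval where these $\Delta_i$ are positive. Then the solution of $\mathrm{Op}_n[F]x=0$ is $$x=\sum_{k=1}^r\frac{\mu_k}{\Delta_1^{\,k-1/2}}+\sum_{i=r+1}^n\frac{\xi_i}{\sqrt{\Delta_i}},\qquad \mu_k,\xi_i\in\mathbb{R}.$$ Moreover, the general solution of $\mathrm{Op}_n[F]x=(n+\frac12)\nu_n a+\beta_n$ (with real constants $\nu_n,\beta_n$) is obtained, up to an additive constant, by adding to this $x$ the linear term $\frac{\nu_n}2a$.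
   Context: $D_a=d/da$, $F^{(m)}=D_a^mF$; Pochhammer $(z)_0=1$, $(z)_s=z(z+1)\cdots(z+s-1)$; $\mathrm{Op}_n[F]=\sum_{s=0}^n\frac{F^{(n-s)}}{(n-s)!}\frac{1}{(1/2)_s}D_a^s$. *)

theory Defs
  imports "HOL-Analysis.Analysis" "HOL-Computational_Algebra.Polynomial"
begin

definition Op :: "nat \<Rightarrow> real poly \<Rightarrow> (real \<Rightarrow> real) \<Rightarrow> real \<Rightarrow> real" where
  "Op n F x a = (\<Sum>s=0..n. poly ((pderiv ^^ (n - s)) F) a / fact (n - s)
                     * (1 / pochhammer (1/2) s) * (deriv ^^ s) x a)"

definition ndiff_on :: "nat \<Rightarrow> (real \<Rightarrow> real) \<Rightarrow> real set \<Rightarrow> bool" where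
  "ndiff_on n x I \<longleftrightarrow> (\<forall>k<n. \<forall>t\<in>I. (deriv ^^ k) x differentiable (at t))"

definition Fpoly :: "nat \<Rightarrow> nat \<Rightarrow> (nat \<Rightarrow> real) \<Rightarrow> real poly" where
  "Fpoly r n a = [:- a 1, 1:] ^ r * (\<Prod>i\<in>{r+1..n}. [:- a i, 1:])"

definition hom_sol :: "nat \<Rightarrow> nat \<Rightarrow> (nat \<Rightarrow> real) \<Rightarrow> (nat \<Rightarrow> real)
    \<Rightarrow> (nat \<Rightarrow> real) \<Rightarrow> (nat \<Rightarrow> real) \<Rightarrow> real \<Rightarrow> real" where
  "hom_sol r n a eps \<mu> \<xi> t =
     (\<Sum>k=1..r. \<mu> k / (eps 1 * (t - a 1)) powr (real k - 1/2))
     + (\<Sum>i=r+1..n. \<xi> i / sqrt (eps i * (t - a i)))"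

end

theory Submission
  imports Defs "Jordan_Normal_Form.Determinant"
begin

text \<open>
  Write \<open>\<Delta> = \<epsilon> (t - b)\<close>. For a polynomial \<open>F\<close> of degree at most \<open>n\<close>, Taylor expansion
  of \<open>F\<close> around \<open>t\<close> shows that \<open>Op\<^sub>n[F]\<close> maps \<open>\<Delta> powr (1/2 - k)\<close> to a linear combination
  of the values at \<open>b\<close> of the first \<open>k\<close> derivatives of \<open>F\<close>: the weights of the expansion are
  polynomials of degree less than \<open>k\<close> in the summation index. Hence \<open>\<Delta>\<^sub>1 powr (1/2 - k)\<close>
  for \<open>k \<le> r\<close> and \<open>\<Delta>\<^sub>i powr (-1/2)\<close> for \<open>i > r\<close> solve \<open>Op\<^sub>n[F] x = 0\<close>.

  These \<open>n\<close> solutions are linearly independent: the coefficient of \<open>\<Delta>\<^sub>i powr (-1/2)\<close> is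
  isolated by applying \<open>Op\<^sub>n[G]\<close> for a polynomial \<open>G\<close> vanishing to high order at \<open>a\<^sub>1\<close> and
  at all \<open>a\<^sub>l\<close> except \<open>a\<^sub>i\<close>, and what remains is a polynomial in \<open>\<Delta>\<^sub>1\<close> with infinitely
  many roots. Since the leading coefficient \<open>F / (1/2)\<^sub>n\<close> does not vanish on the interval, a
  Gronwall estimate for the sum of the squares of the first \<open>n\<close> derivatives shows that a
  solution is determined by these derivatives at one point, so the \<open>n\<close> solutions span.

  On an affine function only the two top derivatives of \<open>F\<close> act, which makes
  \<open>\<nu> t / 2 + c\<close> a particular solution of the inhomogeneous equation for a suitable \<open>c\<close>.
\<close>

section \<open>Sequences of successive derivatives\<close>

definition has_derivs_on :: "real set \<Rightarrow> (nat \<Rightarrow> real \<Rightarrow> real) \<Rightarrow> bool" where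
  "has_derivs_on S f \<longleftrightarrow> (\<forall>k. \<forall>t\<in>S. (f k has_real_derivative f (Suc k) t) (at t))"

lemma deriv_cong_open:
  assumes "open S" "t \<in> S" "\<And>y. y \<in> S \<Longrightarrow> f y = g y"
  shows "deriv f t = deriv g t"
  by (rule deriv_cong_ev) (use assms in \<open>auto simp: eventually_nhds\<close>)

lemma iter_deriv_cong_open:
  assumes "open S" "\<And>y. y \<in> S \<Longrightarrow> f y = g y" "y \<in> S"
  shows "(deriv ^^ k) f y = (deriv ^^ k) g y"
  using assms(3)
proof (induction k arbitrary: y)
  case (Suc k)
  thus ?case using deriv_cong_open[OF assms(1), of y "(deriv ^^ k) f" "(deriv ^^ k) g"] by simp
qed (use assms in simp)

lemma has_derivs_on_iter_deriv:
  assumes "open S" "has_derivs_on S f" "\<And>t. t \<in> S \<Longrightarrow> x t = f 0 t" "t \<in> S"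
  shows "(deriv ^^ k) x t = f k t"
  using assms(4)
proof (induction k arbitrary: t)
  case (Suc k)
  have "(deriv ^^ Suc k) x t = deriv ((deriv ^^ k) x) t" by simp
  also have "\<dots> = deriv (f k) t"
    using deriv_cong_open[OF assms(1) Suc.prems] Suc.IH by blast
  also have "\<dots> = f (Suc k) t"
    using assms(2) Suc.prems unfolding has_derivs_on_def by (simp add: DERIV_imp_deriv)
  finally show ?case .
qed (use assms(3) in simp)

lemma has_derivs_on_imp_ndiff_on:
  assumes "open S" "has_derivs_on S f" "\<And>t. t \<in> S \<Longrightarrow> x t = f 0 t"
  shows "ndiff_on n x S"
  unfolding ndiff_on_def
proof (intro allI impI ballI)
  fix k t assume t: "t \<in> S"
  have "(f k has_real_derivative f (Suc k) t) (at t)"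
    using assms(2) t unfolding has_derivs_on_def by blast
  hence "((deriv ^^ k) x has_real_derivative f (Suc k) t) (at t)"
    by (rule has_field_derivative_transform_within_open[OF _ assms(1) t])
       (simp add: has_derivs_on_iter_deriv[OF assms])
  thus "(deriv ^^ k) x differentiable at t" by (auto simp: real_differentiable_def)
qed

lemma has_derivs_on_add:
  "has_derivs_on S f \<Longrightarrow> has_derivs_on S g \<Longrightarrow> has_derivs_on S (\<lambda>k t. f k t + g k t)"
  unfolding has_derivs_on_def by (auto intro: DERIV_add)

lemma has_derivs_on_sum:
  "finite A \<Longrightarrow> (\<And>i. i \<in> A \<Longrightarrow> has_derivs_on S (f i))
    \<Longrightarrow> has_derivs_on S (\<lambda>k t. \<Sum>i\<in>A. c i * f i k t)"
  unfolding has_derivs_on_def by (auto intro!: DERIV_sum DERIV_cmult)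

lemma has_derivs_on_affine:
  "has_derivs_on S (\<lambda>k t. if k = 0 then \<alpha> * t + c else if k = 1 then \<alpha> else 0)"
  unfolding has_derivs_on_def
proof (intro allI ballI)
  fix k t
  show "((\<lambda>t. if k = 0 then \<alpha> * t + c else if k = 1 then \<alpha> else 0) has_real_derivative
      (if Suc k = 0 then \<alpha> * t + c else if Suc k = 1 then \<alpha> else 0)) (at t)"
    by (cases "k = 0") (auto intro!: derivative_eq_intros)
qed

text \<open>\<open>affine_powr_derivs b e p k\<close> is the \<open>k\<close>-th derivative of \<open>(e (t - b)) powr p\<close>.\<close>

definition affine_powr_derivs :: "real \<Rightarrow> real \<Rightarrow> real \<Rightarrow> nat \<Rightarrow> real \<Rightarrow> real" where
  "affine_powr_derivs b e p k t = e ^ k * (\<Prod>j<k. (p - real j)) * (e * (t - b)) powr (p - real k)"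

lemma DERIV_affine_powr:
  fixes e b q t :: real
  assumes "e * (t - b) > 0"
  shows "((\<lambda>t. (e * (t - b)) powr q) has_real_derivative e * q * (e * (t - b)) powr (q - 1)) (at t)"
proof -
  have "((\<lambda>t. (e * (t - b)) powr ((\<lambda>_. q) t)) has_real_derivative
     ((e * (t - b)) powr q) * (0 * ln (e * (t - b)) + e * q / (e * (t - b)))) (at t)"
    by (rule DERIV_powr) (use assms in \<open>auto intro!: derivative_eq_intros\<close>)
  moreover have "((e * (t - b)) powr q) * (0 * ln (e * (t - b)) + e * q / (e * (t - b)))
     = e * q * (e * (t - b)) powr (q - 1)"
    using assms by (simp add: powr_diff)
  ultimately show ?thesis by simp
qed

lemma has_derivs_on_affine_powr:
  assumes "\<forall>t\<in>S. e * (t - b) > 0"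
  shows "has_derivs_on S (affine_powr_derivs b e p)"
  unfolding has_derivs_on_def
proof (intro allI ballI)
  fix k t assume t: "t \<in> S"
  have "((\<lambda>t. e ^ k * (\<Prod>j<k. (p - real j)) * (e * (t - b)) powr (p - real k)) has_real_derivative
     e ^ k * (\<Prod>j<k. (p - real j)) * (e * (p - real k) * (e * (t - b)) powr (p - real k - 1))) (at t)"
    by (intro DERIV_cmult DERIV_affine_powr) (use assms t in auto)
  moreover have "e ^ k * (\<Prod>j<k. (p - real j)) * (e * (p - real k) * (e * (t - b)) powr (p - real k - 1))
     = affine_powr_derivs b e p (Suc k) t"
    unfolding affine_powr_derivs_def by (simp add: algebra_simps)
  ultimately show "(affine_powr_derivs b e p k has_real_derivative affine_powr_derivs b e p (Suc k) t) (at t)"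
    unfolding affine_powr_derivs_def by simp
qed

lemma affine_powr_derivs_0 [simp]: "affine_powr_derivs b e p 0 t = (e * (t - b)) powr p"
  unfolding affine_powr_derivs_def by simp

definition Op_derivs :: "nat \<Rightarrow> real poly \<Rightarrow> (nat \<Rightarrow> real \<Rightarrow> real) \<Rightarrow> real \<Rightarrow> real" where
  "Op_derivs n F f t = (\<Sum>s=0..n. poly ((pderiv ^^ (n - s)) F) t / fact (n - s)
                           * (1 / pochhammer (1/2) s) * f s t)"

lemma Op_eq_Op_derivs:
  assumes "open S" "has_derivs_on S f" "\<And>t. t \<in> S \<Longrightarrow> x t = f 0 t" "t \<in> S"
  shows "Op n F x t = Op_derivs n F f t"
  unfolding Op_def Op_derivs_def using has_derivs_on_iter_deriv[OF assms] by simp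

lemma Op_derivs_add: "Op_derivs n F (\<lambda>k t. f k t + g k t) t = Op_derivs n F f t + Op_derivs n F g t"
  unfolding Op_derivs_def sum.distrib[symmetric] by (intro sum.cong refl) (simp add: distrib_left)

lemma Op_derivs_sum:
  "Op_derivs n F (\<lambda>k t. \<Sum>i\<in>A. c i * f i k t) t = (\<Sum>i\<in>A. c i * Op_derivs n F (f i) t)"
  unfolding Op_derivs_def sum_distrib_left by (subst sum.swap) (auto intro!: sum.cong simp: mult_ac)

section \<open>Polynomial identities\<close>

lemma higher_pderiv_eq_0: "degree (p::real poly) < k \<Longrightarrow> (pderiv ^^ k) p = 0"
  by (intro poly_eqI) (simp add: coeff_higher_pderiv coeff_eq_0)

lemma poly_Taylor_expansion:
  fixes G :: "real poly"
  assumes "degree G \<le> N"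
  shows "poly G (t + h) = (\<Sum>i\<le>N. poly ((pderiv ^^ i) G) t / fact i * h ^ i)"
proof -
  define diff where "diff m x = poly ((pderiv ^^ m) G) (t + x)" for m x
  have "\<forall>m x. DERIV (diff m) x :> diff (Suc m) x"
    unfolding diff_def by (auto intro!: derivative_eq_intros)
  then obtain s where s: "diff 0 h = (\<Sum>m<Suc N. diff m 0 / fact m * h ^ m)
      + diff (Suc N) s / fact (Suc N) * h ^ Suc N"
    using Maclaurin_all_le[of diff "diff 0" h "Suc N"] by blast
  have "diff (Suc N) s = 0" unfolding diff_def using assms higher_pderiv_eq_0[of G "Suc N"] by simp
  with s show ?thesis unfolding diff_def by (simp add: lessThan_Suc_atMost)
qed

definition falling_fact :: "nat \<Rightarrow> nat \<Rightarrow> real" where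
  "falling_fact j m = (\<Prod>i<m. (real j - real i))"

lemma falling_fact_eq_0: "j < m \<Longrightarrow> falling_fact j m = 0"
  unfolding falling_fact_def by (rule prod_zero) auto

lemma falling_fact_Suc: "falling_fact j (Suc m) = falling_fact j m * (real j - real m)"
  unfolding falling_fact_def by simp

lemma falling_fact_eq_fact_div: "falling_fact (m + i) m = fact (m + i) / fact i"
proof (induction m)
  case (Suc m)
  have "falling_fact (Suc m + i) (Suc m)
      = (real (Suc m + i) - real 0) * (\<Prod>l<m. (real (Suc m + i) - real (Suc l)))"
    unfolding falling_fact_def by (rule prod.lessThan_Suc_shift)
  also have "(\<Prod>l<m. (real (Suc m + i) - real (Suc l))) = falling_fact (m + i) m"
    unfolding falling_fact_def by (intro prod.cong) auto
  finally have "falling_fact (Suc m + i) (Suc m) = real (Suc m + i) * (fact (m + i) / fact i)"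
    using Suc by simp
  thus ?case by (simp add: algebra_simps)
qed (simp add: falling_fact_def)

text \<open>Differentiating the Taylor expansion \<open>m\<close> times in \<open>h\<close>.\<close>

lemma Taylor_sum_falling_fact:
  fixes F :: "real poly"
  assumes "degree F \<le> n"
  shows "(\<Sum>j=0..n. poly ((pderiv ^^ j) F) t / fact j * falling_fact j m * h ^ j)
       = h ^ m * poly ((pderiv ^^ m) F) (t + h)"
proof (cases "n < m")
  case True
  hence "(pderiv ^^ m) F = 0" using assms by (intro higher_pderiv_eq_0) auto
  moreover have "(\<Sum>j=0..n. poly ((pderiv ^^ j) F) t / fact j * falling_fact j m * h ^ j) = 0"
    using True by (intro sum.neutral) (auto simp: falling_fact_eq_0)
  ultimately show ?thesis by simp
next
  case False
  define G where "G = (pderiv ^^ m) F"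
  have dG: "degree G \<le> n - m" unfolding G_def using assms by (simp add: degree_higher_pderiv)
  have split: "{0..n} = {0..<m} \<union> {m..n}" using False by auto
  have "(\<Sum>j=0..n. poly ((pderiv ^^ j) F) t / fact j * falling_fact j m * h ^ j)
      = (\<Sum>j=m..n. poly ((pderiv ^^ j) F) t / fact j * falling_fact j m * h ^ j)"
    unfolding split by (subst sum.union_disjoint) (auto simp: falling_fact_eq_0)
  also have "\<dots> = (\<Sum>i=0..n-m. poly ((pderiv ^^ (m + i)) F) t / fact (m + i)
                       * falling_fact (m + i) m * h ^ (m + i))"
    using False by (intro sum.reindex_bij_witness[where j="\<lambda>j. j - m" and i="\<lambda>i. m + i"]) auto
  also have "\<dots> = (\<Sum>i=0..n-m. h ^ m * (poly ((pderiv ^^ i) G) t / fact i * h ^ i))"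
  proof (intro sum.cong refl)
    fix i
    have "(pderiv ^^ (m + i)) F = (pderiv ^^ i) G" unfolding G_def by (simp add: funpow_add add.commute)
    thus "poly ((pderiv ^^ (m + i)) F) t / fact (m + i) * falling_fact (m + i) m * h ^ (m + i)
        = h ^ m * (poly ((pderiv ^^ i) G) t / fact i * h ^ i)"
      by (simp add: falling_fact_eq_fact_div power_add)
  qed
  also have "\<dots> = h ^ m * poly G (t + h)"
    using poly_Taylor_expansion[OF dG, of t h] by (simp add: sum_distrib_left atLeast0AtMost)
  finally show ?thesis unfolding G_def .
qed

lemma power_linear_dvd_pderiv:
  fixes P :: "real poly"
  assumes "[:-b, 1:] ^ Suc j dvd P"
  shows "[:-b, 1:] ^ j dvd pderiv P"
proof -
  obtain R where P: "P = [:-b, 1:] ^ Suc j * R" using assms by (auto elim: dvdE)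
  have "pderiv P = [:-b, 1:] ^ Suc j * pderiv R
      + R * (Polynomial.smult (of_nat (Suc j)) ([:-b, 1:] ^ j) * pderiv [:-b, 1:])"
    unfolding P pderiv_mult pderiv_power_Suc by simp
  also have "\<dots> = [:-b, 1:] ^ j * ([:-b, 1:] * pderiv R
      + R * Polynomial.smult (of_nat (Suc j)) 1 * pderiv [:-b, 1:])"
    by (simp add: algebra_simps)
  finally show ?thesis by simp
qed

lemma higher_pderiv_root_eq_0:
  fixes P :: "real poly"
  shows "[:-b, 1:] ^ k dvd P \<Longrightarrow> m < k \<Longrightarrow> poly ((pderiv ^^ m) P) b = 0"
proof (induction m arbitrary: P k)
  case 0
  then obtain k' where k: "k = Suc k'" by (cases k) auto
  have "[:-b, 1:] dvd P" using 0(1) unfolding k by (metis dvd_mult_left power_Suc)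
  thus ?case by (simp add: poly_eq_0_iff_dvd)
next
  case (Suc m)
  then obtain k' where k: "k = Suc k'" by (cases k) auto
  have "[:-b, 1:] ^ k' dvd pderiv P" using power_linear_dvd_pderiv Suc.prems(1) unfolding k by blast
  moreover have "m < k'" using Suc.prems k by simp
  ultimately have "poly ((pderiv ^^ m) (pderiv P)) b = 0" by (rule Suc.IH)
  thus ?case by (simp add: funpow_Suc_right del: funpow.simps)
qed

lemma degree_linear_power_mult_prod:
  fixes a :: "nat \<Rightarrow> real"
  assumes "finite A"
  shows "degree ([:-c, 1:] ^ k * (\<Prod>i\<in>A. [:-a i, 1:])) = k + card A"
proof -
  have "(\<Prod>i\<in>A. [:-a i, 1:]) \<noteq> 0" using assms by (auto simp: prod_zero_iff)
  moreover have "degree (\<Prod>i\<in>A. [:-a i, 1:]) = card A"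
    by (subst degree_prod_eq_sum_degree) auto
  ultimately show ?thesis using degree_mult_eq[of "[:-c, 1:] ^ k"] by (simp add: degree_power_eq)
qed

lemma pochhammer_2_eq_fact: "pochhammer (2::real) k = fact (Suc k)"
  by (induction k) (simp_all add: pochhammer_Suc algebra_simps)

lemma poly_degree_le_1: "degree (q::real poly) \<le> 1 \<Longrightarrow> poly q t = coeff q 0 + coeff q 1 * t"
proof -
  assume d: "degree q \<le> 1"
  have "poly q t = (\<Sum>i\<le>degree q. coeff q i * t ^ i)" by (rule poly_altdef)
  also have "\<dots> = (\<Sum>i\<le>1. coeff q i * t ^ i)"
    by (rule sum.mono_neutral_left) (use d in \<open>auto simp: coeff_eq_0\<close>)
  finally show ?thesis by simp
qed

lemma poly_top_higher_pderivs:
  fixes F :: "real poly"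
  assumes dF: "degree F = n" and n: "1 \<le> n"
  shows "poly ((pderiv ^^ n) F) t = fact n * coeff F n"
    and "poly ((pderiv ^^ (n - 1)) F) t = fact (n - 1) * coeff F (n - 1) + fact n * coeff F n * t"
proof -
  have "degree ((pderiv ^^ n) F) \<le> 1" using dF by (simp add: degree_higher_pderiv)
  moreover have "coeff F (Suc n) = 0" using dF by (simp add: coeff_eq_0)
  ultimately show "poly ((pderiv ^^ n) F) t = fact n * coeff F n"
    by (simp add: poly_degree_le_1 coeff_higher_pderiv pochhammer_fact[symmetric] pochhammer_2_eq_fact)
  have dn1: "degree ((pderiv ^^ (n - 1)) F) \<le> 1" using dF by (simp add: degree_higher_pderiv)
  have "coeff ((pderiv ^^ (n - 1)) F) 1 = pochhammer (of_nat (Suc 1)) (n - 1) * coeff F (1 + (n - 1))"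
    by (rule coeff_higher_pderiv)
  also have "\<dots> = fact n * coeff F n" using pochhammer_2_eq_fact[of "n - 1"] n by simp
  finally show "poly ((pderiv ^^ (n - 1)) F) t = fact (n - 1) * coeff F (n - 1) + fact n * coeff F n * t"
    using poly_degree_le_1[OF dn1, of t]
    by (simp add: coeff_higher_pderiv pochhammer_fact[symmetric])
qed

text \<open>
  \<open>Op_weight k s / (b - t)\<^sup>s\<close> is the \<open>s\<close>-th derivative of \<open>\<Delta> powr (1/2 - k)\<close> divided by
  \<open>(1/2)\<^sub>s \<Delta> powr (1/2 - k)\<close>, where \<open>\<Delta> = \<plusminus>(t - b)\<close>.
\<close>

definition Op_weight :: "nat \<Rightarrow> nat \<Rightarrow> real" where
  "Op_weight k s = (-1) ^ s * (\<Prod>i<s. (1/2 - real k - real i)) / pochhammer (1/2) s"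

lemma prod_shift_mult: "(\<Prod>i<s. (c - 1 - real i)) * c = (\<Prod>i<s. (c - real i)) * (c - real s)"
proof (induction s)
  case (Suc s)
  have "(\<Prod>i<Suc s. (c - 1 - real i)) * c = ((\<Prod>i<s. (c - 1 - real i)) * c) * (c - 1 - real s)"
    by (simp only: prod.lessThan_Suc mult_ac)
  also have "\<dots> = (\<Prod>i<s. (c - real i)) * (c - real s) * (c - 1 - real s)" using Suc by simp
  also have "\<dots> = (\<Prod>i<Suc s. (c - real i)) * (c - real (Suc s))" by (simp add: algebra_simps)
  finally show ?case .
qed simp

lemma Op_weight_Suc:
  "Op_weight (Suc k) s = Op_weight k s * (1/2 - real k - real s) / (1/2 - real k)"
proof -
  have c: "1/2 - real k \<noteq> 0"
  proof
    assume "1/2 - real k = 0"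
    hence "2 * k = 1" by linarith
    thus False by presburger
  qed
  have "(\<Prod>i<s. (1/2 - real (Suc k) - real i)) = (\<Prod>i<s. ((1/2 - real k) - 1 - real i))"
    by (intro prod.cong) auto
  hence P: "(\<Prod>i<s. (1/2 - real (Suc k) - real i))
       = (\<Prod>i<s. (1/2 - real k - real i)) * (1/2 - real k - real s) / (1/2 - real k)"
    using prod_shift_mult[where s=s and c="1/2 - real k"] c by (simp add: field_simps)
  have "pochhammer (1/2::real) s > 0" by (rule pochhammer_pos) simp
  thus ?thesis unfolding Op_weight_def P using c by (simp add: field_simps)
qed

lemma Op_weight_1: "Op_weight (Suc 0) s = 1"
proof -
  have "(\<Prod>i<s. (1/2 - real (Suc 0) - real i)) = (\<Prod>i<s. (-1) * (1/2 + real i))"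
    by (intro prod.cong) auto
  also have "\<dots> = (\<Prod>i<s. (-1::real)) * (\<Prod>i<s. (1/2 + real i))"
    by (rule prod.distrib)
  also have "\<dots> = (-1) ^ s * pochhammer (1/2) s"
    by (simp add: pochhammer_prod atLeast0LessThan)
  finally have "(\<Prod>i<s. (1/2 - real (Suc 0) - real i)) = (-1) ^ s * pochhammer (1/2) s" .
  moreover have "pochhammer (1/2::real) s > 0" by (rule pochhammer_pos) simp
  ultimately show ?thesis unfolding Op_weight_def by (simp flip: power_mult_distrib)
qed

lemma Op_weight_falling_fact_expansion:
  assumes "1 \<le> k"
  shows "\<exists>c. \<forall>j\<le>n. Op_weight k (n - j) = (\<Sum>m<k. c m * falling_fact j m)"
  using assms
proof (induction k rule: nat_induct_at_least)
  case base
  show ?case by (rule exI[of _ "\<lambda>_. 1"]) (simp add: Op_weight_1 falling_fact_def)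
next
  case (Suc k)
  then obtain c where c: "\<forall>j\<le>n. Op_weight k (n - j) = (\<Sum>m<k. c m * falling_fact j m)" by blast
  define A where "A = 1/2 - real k - real n"
  define B where "B = 1 / (1/2 - real k)"
  define c' where "c' m = B * ((if m < k then c m * (A + real m) else 0)
                             + (if m = 0 then 0 else c (m - 1)))" for m
  show ?case
  proof (intro exI allI impI)
    fix j assume j: "j \<le> n"
    have "Op_weight (Suc k) (n - j) = Op_weight k (n - j) * (A + real j) * B"
      unfolding Op_weight_Suc A_def B_def using j by (simp add: of_nat_diff)
    also have "\<dots> = B * (\<Sum>m<k. c m * (falling_fact j m * (A + real j)))"
      using c j by (simp add: sum_distrib_left sum_distrib_right algebra_simps)
    also have "(\<Sum>m<k. c m * (falling_fact j m * (A + real j)))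
        = (\<Sum>m<k. c m * (A + real m) * falling_fact j m) + (\<Sum>m<k. c m * falling_fact j (Suc m))"
      by (simp add: falling_fact_Suc sum.distrib[symmetric] algebra_simps)
    also have "(\<Sum>m<k. c m * (A + real m) * falling_fact j m)
        = (\<Sum>m<Suc k. (if m < k then c m * (A + real m) else 0) * falling_fact j m)"
      by simp
    also have "(\<Sum>m<k. c m * falling_fact j (Suc m))
        = (\<Sum>m<Suc k. (if m = 0 then 0 else c (m - 1)) * falling_fact j m)"
      by (subst sum.lessThan_Suc_shift) simp
    finally show "Op_weight (Suc k) (n - j) = (\<Sum>m<Suc k. c' m * falling_fact j m)"
      unfolding c'_def by (simp add: sum.distrib[symmetric] sum_distrib_left algebra_simps)
  qed
qed

section \<open>The operator on negative half-integer powers\<close>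

lemma Op_derivs_affine_powr:
  assumes e: "e = 1 \<or> e = -1" and pos: "e * (t - b) > 0"
  shows "Op_derivs n F (affine_powr_derivs b e (1/2 - real k)) t
       = (e * (t - b)) powr (1/2 - real k) / (b - t) ^ n
         * (\<Sum>j=0..n. poly ((pderiv ^^ j) F) t / fact j * Op_weight k (n - j) * (b - t) ^ j)"
proof -
  define D where "D = e * (t - b)"
  define h where "h = b - t"
  define p where "p = 1/2 - real k"
  have h0: "h \<noteq> 0" using pos e unfolding h_def by auto
  have D0: "D > 0" using pos unfolding D_def .
  have sign: "e ^ s / D ^ s = (-1) ^ s / h ^ s" for s
  proof (cases "e = 1")
    case True
    have "h ^ s = (-1) ^ s * (t - b) ^ s" unfolding h_def by (metis minus_diff_eq power_minus)
    thus ?thesis using True h0 unfolding D_def by (simp add: field_simps)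
  next
    case False
    hence "e = -1" using e by simp
    thus ?thesis unfolding D_def h_def by (simp add: power_divide[symmetric])
  qed
  have summand: "poly ((pderiv ^^ (n - s)) F) t / fact (n - s) * (1 / pochhammer (1/2) s)
        * affine_powr_derivs b e p s t
      = D powr p * (poly ((pderiv ^^ (n - s)) F) t / fact (n - s) * Op_weight k s / h ^ s)" for s
  proof -
    have "affine_powr_derivs b e p s t = D powr p * (\<Prod>j<s. (p - real j)) * (e ^ s / D ^ s)"
      unfolding affine_powr_derivs_def D_def[symmetric] using D0 by (simp add: powr_diff powr_realpow)
    thus ?thesis unfolding sign Op_weight_def p_def by (simp add: field_simps)
  qed
  have "Op_derivs n F (affine_powr_derivs b e p) t
      = D powr p * (\<Sum>s=0..n. poly ((pderiv ^^ (n - s)) F) t / fact (n - s) * Op_weight k s / h ^ s)"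
    unfolding Op_derivs_def summand by (simp add: sum_distrib_left)
  also have "(\<Sum>s=0..n. poly ((pderiv ^^ (n - s)) F) t / fact (n - s) * Op_weight k s / h ^ s)
      = (\<Sum>j=0..n. poly ((pderiv ^^ (n - (n + 0 - j))) F) t / fact (n - (n + 0 - j))
                   * Op_weight k (n + 0 - j) / h ^ (n + 0 - j))"
    by (rule sum.atLeastAtMost_rev)
  also have "\<dots> = (\<Sum>j=0..n. poly ((pderiv ^^ j) F) t / fact j * Op_weight k (n - j) * h ^ j) / h ^ n"
    unfolding sum_divide_distrib
  proof (intro sum.cong refl)
    fix j assume "j \<in> {0..n}"
    hence j: "j \<le> n" by simp
    hence "h ^ n = h ^ (n - j) * h ^ j" by (simp flip: power_add)
    thus "poly ((pderiv ^^ (n - (n + 0 - j))) F) t / fact (n - (n + 0 - j)) * Op_weight k (n + 0 - j)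
          / h ^ (n + 0 - j)
        = poly ((pderiv ^^ j) F) t / fact j * Op_weight k (n - j) * h ^ j / h ^ n"
      using j h0 by (simp add: field_simps)
  qed
  finally show ?thesis unfolding D_def h_def p_def by simp
qed

lemma Op_derivs_affine_powr_eq_0:
  assumes dF: "degree F \<le> n" and k: "1 \<le> k"
    and e: "e = 1 \<or> e = -1" and pos: "e * (t - b) > 0"
    and roots: "\<forall>m<k. poly ((pderiv ^^ m) F) b = 0"
  shows "Op_derivs n F (affine_powr_derivs b e (1/2 - real k)) t = 0"
proof -
  obtain c where c: "\<forall>j\<le>n. Op_weight k (n - j) = (\<Sum>m<k. c m * falling_fact j m)"
    using Op_weight_falling_fact_expansion[OF k] by blast
  have "(\<Sum>j=0..n. poly ((pderiv ^^ j) F) t / fact j * Op_weight k (n - j) * (b - t) ^ j)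
      = (\<Sum>j=0..n. \<Sum>m<k. c m * (poly ((pderiv ^^ j) F) t / fact j * falling_fact j m * (b - t) ^ j))"
    by (intro sum.cong refl) (use c in \<open>auto simp: sum_distrib_left sum_distrib_right algebra_simps\<close>)
  also have "\<dots> = (\<Sum>m<k. c m * (\<Sum>j=0..n. poly ((pderiv ^^ j) F) t / fact j * falling_fact j m * (b - t) ^ j))"
    by (subst sum.swap) (simp add: sum_distrib_left)
  also have "\<dots> = (\<Sum>m<k. c m * ((b - t) ^ m * poly ((pderiv ^^ m) F) b))"
    unfolding Taylor_sum_falling_fact[OF dF] by simp
  also have "\<dots> = 0" using roots by simp
  finally show ?thesis unfolding Op_derivs_affine_powr[OF e pos] by simp
qed

lemma Op_derivs_affine_powr_neg_half:
  assumes dF: "degree F \<le> n" and e: "e = 1 \<or> e = -1" and pos: "e * (t - b) > 0"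
  shows "Op_derivs n F (affine_powr_derivs b e (1/2 - real (Suc 0))) t
       = (e * (t - b)) powr (1/2 - real (Suc 0)) / (b - t) ^ n * poly F b"
proof -
  have "(\<Sum>j=0..n. poly ((pderiv ^^ j) F) t / fact j * Op_weight (Suc 0) (n - j) * (b - t) ^ j)
      = (\<Sum>j=0..n. poly ((pderiv ^^ j) F) t / fact j * falling_fact j 0 * (b - t) ^ j)"
    by (simp add: Op_weight_1 falling_fact_def)
  also have "\<dots> = poly F b" unfolding Taylor_sum_falling_fact[OF dF] by simp
  finally show ?thesis unfolding Op_derivs_affine_powr[OF e pos] by simp
qed

section \<open>Uniqueness for linear equations with nonvanishing leading coefficient\<close>

lemma Gronwall_vanishing:
  fixes E E' :: "real \<Rightarrow> real"
  assumes ab: "a \<le> b"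
    and d: "\<forall>t\<in>{a..b}. (E has_real_derivative E' t) (at t)"
    and bd: "\<forall>t\<in>{a..b}. \<bar>E' t\<bar> \<le> C * E t"
    and nn: "\<forall>t\<in>{a..b}. E t \<ge> 0"
    and z: "E a = 0 \<or> E b = 0"
  shows "\<forall>t\<in>{a..b}. E t = 0"
proof
  fix t assume t: "t \<in> {a..b}"
  show "E t = 0"
  proof (cases "E a = 0")
    case True
    define G where "G x = E x * exp (- C * x)" for x
    have "G a \<ge> G t"
    proof (rule DERIV_nonpos_imp_nonincreasing[of a t G])
      show "a \<le> t" using t by simp
      fix x assume x: "a \<le> x" "x \<le> t"
      hence xab: "x \<in> {a..b}" using t by auto
      have "(G has_real_derivative E' x * exp (- C * x) + E x * (exp (- C * x) * (- C))) (at x)"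
        unfolding G_def using d xab by (auto intro!: derivative_eq_intros)
      moreover have "E' x * exp (- C * x) + E x * (exp (- C * x) * (- C))
          = (E' x - C * E x) * exp (- C * x)"
        by (simp add: algebra_simps)
      moreover have "\<bar>E' x\<bar> \<le> C * E x" using bd xab by blast
      hence "E' x - C * E x \<le> 0" by (simp add: abs_le_iff)
      hence "(E' x - C * E x) * exp (- C * x) \<le> 0" by (simp add: mult_nonpos_nonneg)
      ultimately show "\<exists>y. (G has_real_derivative y) (at x) \<and> y \<le> 0" by auto
    qed
    hence "E t * exp (- C * t) \<le> 0" using True unfolding G_def by simp
    hence "E t \<le> 0" by (simp add: mult_le_0_iff)
    thus ?thesis using nn t by force
  next
    case False
    hence Eb: "E b = 0" using z by simp
    define H where "H x = E x * exp (C * x)" for x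
    have "H t \<le> H b"
    proof (rule DERIV_nonneg_imp_nondecreasing[of t b H])
      show "t \<le> b" using t by simp
      fix x assume x: "t \<le> x" "x \<le> b"
      hence xab: "x \<in> {a..b}" using t by auto
      have "(H has_real_derivative E' x * exp (C * x) + E x * (exp (C * x) * C)) (at x)"
        unfolding H_def using d xab by (auto intro!: derivative_eq_intros)
      moreover have "E' x * exp (C * x) + E x * (exp (C * x) * C) = (E' x + C * E x) * exp (C * x)"
        by (simp add: algebra_simps)
      moreover have "\<bar>E' x\<bar> \<le> C * E x" using bd xab by blast
      hence "E' x + C * E x \<ge> 0" by (simp add: abs_le_iff)
      hence "(E' x + C * E x) * exp (C * x) \<ge> 0" by simp
      ultimately show "\<exists>y. (H has_real_derivative y) (at x) \<and> y \<ge> 0" by auto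
    qed
    hence "E t * exp (C * t) \<le> 0" using Eb unfolding H_def by simp
    hence "E t \<le> 0" by (simp add: mult_le_0_iff)
    thus ?thesis using nn t by force
  qed
qed

lemma abs_mult_le_of_squares_le: "(a::real)\<^sup>2 \<le> E \<Longrightarrow> b\<^sup>2 \<le> E \<Longrightarrow> \<bar>a * b\<bar> \<le> E"
proof -
  assume h: "a\<^sup>2 \<le> E" "b\<^sup>2 \<le> E"
  have "0 \<le> (\<bar>a\<bar> - \<bar>b\<bar>)\<^sup>2" by simp
  hence "2 * \<bar>a * b\<bar> \<le> a\<^sup>2 + b\<^sup>2" by (simp add: power2_eq_square abs_mult algebra_simps)
  thus ?thesis using h by simp
qed

text \<open>
  Here \<open>y s\<close> stands for the \<open>s\<close>-th derivative; the equation is used to eliminate \<open>y n\<close>.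
\<close>

lemma energy_derivative_bound:
  fixes y q :: "nat \<Rightarrow> real"
  assumes ode: "(\<Sum>s=0..n. q s * y s) = 0" and qn: "q n \<noteq> 0"
  shows "\<bar>\<Sum>k<n. 2 * (y k * y (Suc k))\<bar>
       \<le> 2 * real n * (1 + (\<Sum>s<n. \<bar>q s / q n\<bar>)) * (\<Sum>k<n. (y k)\<^sup>2)"
proof -
  define E where "E = (\<Sum>k<n. (y k)\<^sup>2)"
  define Q where "Q = (\<Sum>s<n. \<bar>q s / q n\<bar>)"
  have E0: "E \<ge> 0" and Q0: "Q \<ge> 0" unfolding E_def Q_def by (simp_all add: sum_nonneg)
  have sq: "(y k)\<^sup>2 \<le> E" if "k < n" for k
    unfolding E_def by (rule member_le_sum) (use that in auto)
  have EQ: "E \<le> (1 + Q) * E" using E0 Q0 by (simp add: distrib_right)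
  have each: "\<bar>y k * y (Suc k)\<bar> \<le> (1 + Q) * E" if k: "k < n" for k
  proof (cases "Suc k < n")
    case True
    have "\<bar>y k * y (Suc k)\<bar> \<le> E" by (rule abs_mult_le_of_squares_le) (use sq k True in auto)
    thus ?thesis using EQ by linarith
  next
    case False
    hence kn: "Suc k = n" using k by simp
    have "(\<Sum>s<n. q s * y s) + q n * y n = 0"
      using ode by (simp add: atLeast0AtMost lessThan_Suc_atMost[symmetric])
    hence "q n * y n = - (\<Sum>s<n. q s * y s)" by linarith
    hence "y n = - (\<Sum>s<n. q s * y s) / q n" using qn by (simp add: field_simps)
    hence yn: "y n = - (\<Sum>s<n. q s / q n * y s)" by (simp add: sum_divide_distrib)
    have "y k * y n = - (\<Sum>s<n. q s / q n * (y s * y k))"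
      unfolding yn by (simp add: sum_distrib_left algebra_simps)
    hence "\<bar>y k * y n\<bar> = \<bar>\<Sum>s<n. q s / q n * (y s * y k)\<bar>" by simp
    also have "\<dots> \<le> (\<Sum>s<n. \<bar>q s / q n\<bar> * \<bar>y s * y k\<bar>)"
      by (rule order.trans[OF sum_abs]) (simp add: abs_mult)
    also have "\<dots> \<le> (\<Sum>s<n. \<bar>q s / q n\<bar> * E)"
    proof (rule sum_mono)
      fix s assume "s \<in> {..<n}"
      hence "\<bar>y s * y k\<bar> \<le> E" using k by (intro abs_mult_le_of_squares_le sq) auto
      thus "\<bar>q s / q n\<bar> * \<bar>y s * y k\<bar> \<le> \<bar>q s / q n\<bar> * E" by (rule mult_left_mono) simp
    qed
    also have "\<dots> = Q * E" unfolding Q_def by (simp add: sum_distrib_right)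
    also have "\<dots> \<le> (1 + Q) * E" using E0 by (simp add: distrib_right)
    finally show ?thesis using kn by simp
  qed
  have "\<bar>\<Sum>k<n. 2 * (y k * y (Suc k))\<bar> \<le> (\<Sum>k<n. \<bar>2 * (y k * y (Suc k))\<bar>)" by (rule sum_abs)
  also have "\<dots> \<le> (\<Sum>k<n. 2 * ((1 + Q) * E))"
    by (intro sum_mono) (use each in \<open>auto simp: abs_mult\<close>)
  also have "\<dots> = 2 * real n * (1 + Q) * E" by simp
  finally show ?thesis unfolding E_def Q_def .
qed

lemma has_real_derivative_energy:
  assumes nd: "ndiff_on n y I" and t: "t \<in> I"
  shows "((\<lambda>t. \<Sum>k<n. ((deriv ^^ k) y t)\<^sup>2) has_real_derivative
            (\<Sum>k<n. 2 * ((deriv ^^ k) y t * (deriv ^^ Suc k) y t))) (at t)"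
proof -
  have "((\<lambda>t. \<Sum>k<n. (deriv ^^ k) y t * (deriv ^^ k) y t) has_real_derivative
      (\<Sum>k<n. (deriv ^^ k) y t * (deriv ^^ Suc k) y t + (deriv ^^ Suc k) y t * (deriv ^^ k) y t)) (at t)"
  proof (rule DERIV_sum, rule DERIV_mult')
    fix k assume "k \<in> {..<n}"
    hence "(deriv ^^ k) y differentiable at t" using nd t unfolding ndiff_on_def by blast
    thus "((deriv ^^ k) y has_real_derivative (deriv ^^ Suc k) y t) (at t)"
      by (simp add: DERIV_deriv_iff_real_differentiable)
    thus "((deriv ^^ k) y has_real_derivative (deriv ^^ Suc k) y t) (at t)" .
  qed
  thus ?thesis by (simp add: power2_eq_square algebra_simps)
qed

lemma continuous_ratios_bounded_Icc:
  fixes q :: "nat \<Rightarrow> real \<Rightarrow> real"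
  assumes "\<forall>s\<le>n. continuous_on {a..b} (q s)" and "\<forall>t\<in>{a..b}. q n t \<noteq> 0"
  obtains M where "\<forall>t\<in>{a..b}. (\<Sum>s<n. \<bar>q s t / q n t\<bar>) \<le> M"
proof -
  have "continuous_on {a..b} (\<lambda>t. \<Sum>s<n. \<bar>q s t / q n t\<bar>)"
  proof (rule continuous_on_sum, rule continuous_on_rabs, rule continuous_on_divide)
    fix s assume "s \<in> {..<n}"
    thus "continuous_on {a..b} (q s)" using assms(1) by simp
    show "continuous_on {a..b} (q n)" using assms(1) by simp
  qed (use assms(2) in auto)
  hence "bounded ((\<lambda>t. \<Sum>s<n. \<bar>q s t / q n t\<bar>) ` {a..b})"
    by (rule compact_imp_bounded[OF compact_continuous_image[OF _ compact_Icc]])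
  then obtain M where "\<forall>x\<in>(\<lambda>t. \<Sum>s<n. \<bar>q s t / q n t\<bar>) ` {a..b}. norm x \<le> M"
    unfolding bounded_iff by blast
  hence "\<forall>t\<in>{a..b}. \<bar>\<Sum>s<n. \<bar>q s t / q n t\<bar>\<bar> \<le> M" by simp
  thus ?thesis using that by (meson abs_ge_self order_trans)
qed

lemma linear_ode_unique:
  fixes y :: "real \<Rightarrow> real" and q :: "nat \<Rightarrow> real \<Rightarrow> real"
  assumes I: "is_interval I" and t0: "t0 \<in> I"
    and nd: "ndiff_on n y I"
    and cont: "\<forall>s\<le>n. continuous_on I (q s)"
    and qn: "\<forall>t\<in>I. q n t \<noteq> 0"
    and ode: "\<forall>t\<in>I. (\<Sum>s=0..n. q s t * (deriv ^^ s) y t) = 0"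
    and init: "\<forall>k<n. (deriv ^^ k) y t0 = 0"
    and t1: "t1 \<in> I"
  shows "y t1 = 0"
proof (cases "n = 0")
  case True
  thus ?thesis using ode qn t1 by simp
next
  case False
  define a where "a = min t0 t1"
  define b where "b = max t0 t1"
  have ab: "a \<le> b" unfolding a_def b_def by simp
  have "a \<in> I" "b \<in> I" unfolding a_def b_def using t0 t1 by (simp_all add: min_def max_def)
  hence JI: "{a..b} \<subseteq> I" using I unfolding is_interval_1 by (meson atLeastAtMost_iff subsetI)
  define Y where "Y k t = (deriv ^^ k) y t" for k t
  define E where "E t = (\<Sum>k<n. (Y k t)\<^sup>2)" for t
  define E' where "E' t = (\<Sum>k<n. 2 * (Y k t * Y (Suc k) t))" for t
  have dE: "(E has_real_derivative E' t) (at t)" if "t \<in> I" for t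
    unfolding E_def E'_def Y_def by (rule has_real_derivative_energy[OF nd that])
  define Q where "Q t = (\<Sum>s<n. \<bar>q s t / q n t\<bar>)" for t
  obtain M where M: "\<forall>t\<in>{a..b}. Q t \<le> M"
    unfolding Q_def using continuous_ratios_bounded_Icc[of n a b q] cont qn JI
    by (meson continuous_on_subset order_trans subsetD)
  have "\<forall>t\<in>{a..b}. E t = 0"
  proof (rule Gronwall_vanishing[OF ab])
    show "\<forall>t\<in>{a..b}. (E has_real_derivative E' t) (at t)" using dE JI by auto
    show "\<forall>t\<in>{a..b}. \<bar>E' t\<bar> \<le> 2 * real n * (1 + M) * E t"
    proof
      fix t assume t: "t \<in> {a..b}"
      hence tI: "t \<in> I" using JI by auto
      have "\<bar>E' t\<bar> \<le> 2 * real n * (1 + Q t) * E t"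
        unfolding E'_def E_def Q_def
        by (rule energy_derivative_bound) (use ode qn tI in \<open>simp_all add: Y_def\<close>)
      also have "\<dots> \<le> 2 * real n * (1 + M) * E t"
      proof (rule mult_right_mono)
        show "2 * real n * (1 + Q t) \<le> 2 * real n * (1 + M)" using M t by (simp add: mult_left_mono)
        show "0 \<le> E t" unfolding E_def by (simp add: sum_nonneg)
      qed
      finally show "\<bar>E' t\<bar> \<le> 2 * real n * (1 + M) * E t" .
    qed
    show "\<forall>t\<in>{a..b}. 0 \<le> E t" unfolding E_def by (simp add: sum_nonneg)
    show "E a = 0 \<or> E b = 0" using init unfolding a_def b_def E_def Y_def by (simp add: min_def max_def)
  qed
  moreover have "t1 \<in> {a..b}" unfolding a_def b_def by simp
  ultimately have "E t1 = 0" by blast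
  moreover have "(Y 0 t1)\<^sup>2 \<le> E t1"
    unfolding E_def by (rule member_le_sum) (use False in auto)
  ultimately show ?thesis unfolding Y_def by simp
qed

lemma iter_deriv_diff:
  assumes S: "open S" and nx: "ndiff_on n x S" and ny: "ndiff_on n y S"
  shows "k \<le> n \<Longrightarrow> t \<in> S \<Longrightarrow> (deriv ^^ k) (\<lambda>t. x t - y t) t = (deriv ^^ k) x t - (deriv ^^ k) y t"
proof (induction k arbitrary: t)
  case (Suc k)
  have "(deriv ^^ Suc k) (\<lambda>t. x t - y t) t = deriv (\<lambda>t. (deriv ^^ k) x t - (deriv ^^ k) y t) t"
    using deriv_cong_open[OF S Suc.prems(2), of "(deriv ^^ k) (\<lambda>t. x t - y t)"] Suc.IH Suc.prems
    by simp
  also have "\<dots> = deriv ((deriv ^^ k) x) t - deriv ((deriv ^^ k) y) t"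
  proof (rule DERIV_imp_deriv, rule DERIV_diff)
    have "(deriv ^^ k) x differentiable at t" "(deriv ^^ k) y differentiable at t"
      using nx ny Suc.prems unfolding ndiff_on_def by auto
    thus "((deriv ^^ k) x has_real_derivative deriv ((deriv ^^ k) x) t) (at t)"
      "((deriv ^^ k) y has_real_derivative deriv ((deriv ^^ k) y) t) (at t)"
      by (simp_all add: DERIV_deriv_iff_real_differentiable)
  qed
  finally show ?case by simp
qed simp

lemma ndiff_on_diff:
  assumes S: "open S" and nx: "ndiff_on n x S" and ny: "ndiff_on n y S"
  shows "ndiff_on n (\<lambda>t. x t - y t) S"
  unfolding ndiff_on_def
proof (intro allI impI ballI)
  fix k t assume k: "k < n" and t: "t \<in> S"
  have "(deriv ^^ k) x differentiable at t" "(deriv ^^ k) y differentiable at t"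
    using nx ny k t unfolding ndiff_on_def by blast+
  hence "((\<lambda>t. (deriv ^^ k) x t - (deriv ^^ k) y t) has_real_derivative
      deriv ((deriv ^^ k) x) t - deriv ((deriv ^^ k) y) t) (at t)"
    by (intro DERIV_diff) (simp_all add: DERIV_deriv_iff_real_differentiable)
  hence "((deriv ^^ k) (\<lambda>t. x t - y t) has_real_derivative
      deriv ((deriv ^^ k) x) t - deriv ((deriv ^^ k) y) t) (at t)"
    by (rule has_field_derivative_transform_within_open[OF _ S t])
       (use iter_deriv_diff[OF S nx ny] k in auto)
  thus "(deriv ^^ k) (\<lambda>t. x t - y t) differentiable at t" by (auto simp: real_differentiable_def)
qed

lemma Op_diff:
  assumes S: "open S" and nx: "ndiff_on n x S" and ny: "ndiff_on n y S" and t: "t \<in> S"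
  shows "Op n F (\<lambda>t. x t - y t) t = Op n F x t - Op n F y t"
proof -
  have "Op n F (\<lambda>t. x t - y t) t
      = (\<Sum>s=0..n. poly ((pderiv ^^ (n - s)) F) t / fact (n - s) * (1 / pochhammer (1/2) s)
           * ((deriv ^^ s) x t - (deriv ^^ s) y t))"
    unfolding Op_def by (intro sum.cong refl) (use iter_deriv_diff[OF S nx ny _ t] in simp)
  also have "\<dots> = Op n F x t - Op n F y t"
    unfolding Op_def right_diff_distrib sum_subtractf ..
  finally show ?thesis .
qed

lemma Op_eq_0_if_vanishing:
  assumes "open S" "\<And>t. t \<in> S \<Longrightarrow> x t = 0" "t \<in> S"
  shows "Op n F x t = 0"
proof -
  have "(deriv ^^ s) x t = (deriv ^^ s) (\<lambda>_. 0) t" for s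
    by (rule iter_deriv_cong_open) (use assms in auto)
  moreover have "(deriv ^^ s) (\<lambda>_. 0::real) = (\<lambda>_. 0)" for s
    by (induction s) auto
  ultimately show ?thesis unfolding Op_def by simp
qed

section \<open>The solutions of the equation\<close>

locale Fpoly_setting =
  fixes r n :: nat and a eps :: "nat \<Rightarrow> real" and I :: "real set"
  assumes r2: "2 \<le> r" and rn: "r \<le> n" and inj: "inj_on a ({1} \<union> {r+1..n})"
    and eps_sign: "\<forall>i\<in>{1} \<union> {r+1..n}. eps i = 1 \<or> eps i = -1"
    and open_I: "open I" and interval_I: "is_interval I" and I_nonempty: "I \<noteq> {}"
    and Delta_pos: "\<forall>t\<in>I. \<forall>i\<in>{1} \<union> {r+1..n}. eps i * (t - a i) > 0"
begin

definition F :: "real poly" where "F = Fpoly r n a"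

text \<open>
  The basis solutions are indexed by \<open>p \<in> {1..n}\<close>: \<open>\<Delta>\<^sub>1 powr (1/2 - p)\<close> for \<open>p \<le> r\<close> and
  \<open>\<Delta>\<^sub>p powr (-1/2)\<close> for \<open>p > r\<close>, each together with its derivatives.
\<close>

definition basis_sol :: "nat \<Rightarrow> nat \<Rightarrow> real \<Rightarrow> real" where
  "basis_sol p = (if p \<le> r then affine_powr_derivs (a 1) (eps 1) (1/2 - real p)
                  else affine_powr_derivs (a p) (eps p) (1/2 - real (Suc 0)))"

definition sol_comb :: "(nat \<Rightarrow> real) \<Rightarrow> nat \<Rightarrow> real \<Rightarrow> real" where
  "sol_comb v k t = (\<Sum>p\<in>{1..n}. v p * basis_sol p k t)"

lemma eps_1: "eps 1 = 1 \<or> eps 1 = -1"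
  using eps_sign by simp

lemma eps_simple: "i \<in> {r+1..n} \<Longrightarrow> eps i = 1 \<or> eps i = -1"
  using eps_sign by simp

lemma Delta_1_pos: "t \<in> I \<Longrightarrow> eps 1 * (t - a 1) > 0"
  using Delta_pos by simp

lemma Delta_simple_pos: "t \<in> I \<Longrightarrow> i \<in> {r+1..n} \<Longrightarrow> eps i * (t - a i) > 0"
  using Delta_pos by simp

lemma one_le_n: "1 \<le> n" using r2 rn by simp

lemma split_1n: "{1..n} = {1..r} \<union> {r+1..n}" using rn by auto

lemma has_derivs_on_sol_comb: "has_derivs_on I (sol_comb v)"
proof -
  have "has_derivs_on I (basis_sol p)" if "p \<in> {1..n}" for p
    unfolding basis_sol_def using that Delta_1_pos Delta_simple_pos
    by (auto intro!: has_derivs_on_affine_powr)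
  hence "has_derivs_on I (\<lambda>k t. \<Sum>p\<in>{1..n}. v p * basis_sol p k t)"
    by (intro has_derivs_on_sum) auto
  thus ?thesis unfolding sol_comb_def[abs_def] .
qed

lemma F_degree: "degree F = n"
  unfolding F_def Fpoly_def using degree_linear_power_mult_prod[of "{r+1..n}" "a 1" r a] rn by simp

lemma F_monic: "coeff F n = 1"
proof -
  have "lead_coeff F = 1"
    unfolding F_def Fpoly_def by (simp add: lead_coeff_mult lead_coeff_power lead_coeff_prod)
  thus ?thesis using F_degree by simp
qed

lemma F_nonzero:
  assumes t: "t \<in> I"
  shows "poly F t \<noteq> 0"
proof -
  have "t - a 1 \<noteq> 0" using Delta_1_pos[OF t] by auto
  moreover have "\<forall>i\<in>{r+1..n}. t - a i \<noteq> 0" using Delta_simple_pos[OF t] by fastforce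
  ultimately show ?thesis unfolding F_def Fpoly_def by (auto simp: poly_prod prod_zero_iff)
qed

lemma Op_derivs_basis_sol_eq_0:
  assumes dG: "degree G \<le> n" and p: "p \<in> {1..n}" and t: "t \<in> I"
    and root_1: "p \<le> r \<Longrightarrow> \<forall>m<p. poly ((pderiv ^^ m) G) (a 1) = 0"
    and root_p: "r < p \<Longrightarrow> poly G (a p) = 0"
  shows "Op_derivs n G (basis_sol p) t = 0"
proof (cases "p \<le> r")
  case True
  have "Op_derivs n G (affine_powr_derivs (a 1) (eps 1) (1/2 - real p)) t = 0"
    by (rule Op_derivs_affine_powr_eq_0[OF dG _ eps_1 Delta_1_pos[OF t]]) (use p True root_1 in auto)
  thus ?thesis unfolding basis_sol_def using True by simp
next
  case False
  hence p': "p \<in> {r+1..n}" using p by auto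
  have "Op_derivs n G (affine_powr_derivs (a p) (eps p) (1/2 - real (Suc 0))) t = 0"
    by (rule Op_derivs_affine_powr_eq_0[OF dG _ eps_simple[OF p'] Delta_simple_pos[OF t p']])
       (use root_p False in auto)
  thus ?thesis unfolding basis_sol_def using False by simp
qed

lemma Op_sol_comb:
  assumes t: "t \<in> I" and x: "\<And>s. s \<in> I \<Longrightarrow> x s = sol_comb v 0 s"
  shows "Op n F x t = 0"
proof -
  have "Op n F x t = Op_derivs n F (sol_comb v) t"
    by (rule Op_eq_Op_derivs[OF open_I has_derivs_on_sol_comb x t])
  also have "\<dots> = (\<Sum>p\<in>{1..n}. v p * Op_derivs n F (basis_sol p) t)"
    unfolding sol_comb_def[abs_def] by (rule Op_derivs_sum)
  also have "\<dots> = 0"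
  proof (intro sum.neutral ballI)
    fix p assume p: "p \<in> {1..n}"
    have "Op_derivs n F (basis_sol p) t = 0"
    proof (rule Op_derivs_basis_sol_eq_0[OF _ p t])
      show "degree F \<le> n" using F_degree by simp
      show "\<forall>m<p. poly ((pderiv ^^ m) F) (a 1) = 0" if "p \<le> r"
      proof (intro allI impI)
        fix m assume "m < p"
        moreover have "[:-a 1, 1:] ^ r dvd F" unfolding F_def Fpoly_def by simp
        ultimately show "poly ((pderiv ^^ m) F) (a 1) = 0"
          using that by (intro higher_pderiv_root_eq_0[of "a 1" r]) simp_all
      qed
      show "poly F (a p) = 0" if "r < p"
        using that p by (auto simp: F_def Fpoly_def poly_prod prod_zero_iff)
    qed
    thus "v p * Op_derivs n F (basis_sol p) t = 0" by simp
  qed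
  finally show ?thesis .
qed

lemma hom_sol_eq_sol_comb:
  assumes t: "t \<in> I"
  shows "hom_sol r n a eps \<mu> \<xi> t = sol_comb (\<lambda>p. if p \<le> r then \<mu> p else \<xi> p) 0 t"
proof -
  have inv_powr: "D powr (1/2 - q) = 1 / D powr (q - 1/2)" if D: "D > 0" for D q :: real
  proof -
    have "D powr (1/2 - q) * D powr (q - 1/2) = 1" using D by (simp flip: powr_add)
    thus ?thesis using D by (simp add: field_simps)
  qed
  let ?w = "\<lambda>p. if p \<le> r then \<mu> p else \<xi> p"
  have "sol_comb ?w 0 t = (\<Sum>p\<in>{1..r}. ?w p * basis_sol p 0 t) + (\<Sum>p\<in>{r+1..n}. ?w p * basis_sol p 0 t)"
    unfolding sol_comb_def split_1n by (rule sum.union_disjoint) auto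
  also have "(\<Sum>p\<in>{1..r}. ?w p * basis_sol p 0 t) = (\<Sum>k=1..r. \<mu> k / (eps 1 * (t - a 1)) powr (real k - 1/2))"
  proof (intro sum.cong refl)
    fix k assume "k \<in> {1..r}"
    thus "?w k * basis_sol k 0 t = \<mu> k / (eps 1 * (t - a 1)) powr (real k - 1/2)"
      using inv_powr[OF Delta_1_pos[OF t], of "real k"] by (simp add: basis_sol_def)
  qed
  also have "(\<Sum>p\<in>{r+1..n}. ?w p * basis_sol p 0 t) = (\<Sum>i=r+1..n. \<xi> i / sqrt (eps i * (t - a i)))"
  proof (intro sum.cong refl)
    fix i assume i: "i \<in> {r+1..n}"
    have D: "eps i * (t - a i) > 0" using Delta_simple_pos[OF t i] .
    have "(eps i * (t - a i)) powr (1/2 - real (Suc 0)) = 1 / sqrt (eps i * (t - a i))"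
      using inv_powr[OF D, of 1] D by (simp add: powr_half_sqrt)
    thus "?w i * basis_sol i 0 t = \<xi> i / sqrt (eps i * (t - a i))"
      using i by (simp add: basis_sol_def)
  qed
  finally show ?thesis unfolding hom_sol_def by simp
qed

lemma Op_F_unique:
  assumes nd: "ndiff_on n y I" and ode: "\<forall>t\<in>I. Op n F y t = 0" and t0: "t0 \<in> I"
    and init: "\<forall>k<n. (deriv ^^ k) y t0 = 0" and t: "t \<in> I"
  shows "y t = 0"
proof (rule linear_ode_unique[OF interval_I t0 nd _ _ _ init t])
  let ?q = "\<lambda>s t. poly ((pderiv ^^ (n - s)) F) t / fact (n - s) * (1 / pochhammer (1/2) s)"
  have "pochhammer (1/2::real) s \<noteq> 0" for s using pochhammer_pos[of "1/2::real" s] by simp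
  thus "\<forall>s\<le>n. continuous_on I (?q s)" and "\<forall>t\<in>I. ?q n t \<noteq> 0"
    using F_nonzero by (auto intro!: continuous_intros)
  show "\<forall>t\<in>I. (\<Sum>s = 0..n. ?q s t * (deriv ^^ s) y t) = 0" using ode unfolding Op_def by simp
qed

lemma I_infinite: "infinite I"
  using finite_imp_not_open open_I I_nonempty by blast

text \<open>
  \<open>Op\<^sub>n[G]\<close> with \<open>G = (X - a\<^sub>1)\<^bsup>r+1\<^esup> \<Prod>\<^sub>l\<^sub>\<noteq>\<^sub>j (X - a\<^sub>l)\<close> kills every basis solution except
  \<open>\<Delta>\<^sub>j powr (-1/2)\<close>, on which it is nonzero since \<open>G(a\<^sub>j) \<noteq> 0\<close>.
\<close>

lemma sol_comb_simple_coeff_eq_0: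
  assumes z: "\<forall>t\<in>I. sol_comb v 0 t = 0" and j: "j \<in> {r+1..n}"
  shows "v j = 0"
proof -
  obtain t where t: "t \<in> I" using I_nonempty by auto
  define G where "G = [:-a 1, 1:] ^ Suc r * (\<Prod>i\<in>{r+1..n}-{j}. [:-a i, 1:])"
  have "degree G = Suc r + card ({r+1..n}-{j})"
    unfolding G_def by (rule degree_linear_power_mult_prod) simp
  hence dG: "degree G \<le> n" using j by simp
  have a_neq: "a j \<noteq> a i" if "i \<in> {1} \<union> {r+1..n}" "i \<noteq> j" for i
    using inj j that unfolding inj_on_def by blast
  have "a j \<noteq> a 1" using a_neq[of 1] j r2 by auto
  moreover have "\<forall>i\<in>{r+1..n}-{j}. a j \<noteq> a i" using a_neq by blast
  ultimately have Gj: "poly G (a j) \<noteq> 0"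
    unfolding G_def by (auto simp: poly_prod prod_zero_iff)
  have others: "Op_derivs n G (basis_sol p) t = 0" if p: "p \<in> {1..n}-{j}" for p
  proof (rule Op_derivs_basis_sol_eq_0[OF dG _ t])
    show "p \<in> {1..n}" using p by simp
    show "\<forall>m<p. poly ((pderiv ^^ m) G) (a 1) = 0" if "p \<le> r"
    proof (intro allI impI)
      fix m assume "m < p"
      moreover have "[:-a 1, 1:] ^ Suc r dvd G" unfolding G_def by simp
      ultimately show "poly ((pderiv ^^ m) G) (a 1) = 0"
        using that by (intro higher_pderiv_root_eq_0[of "a 1" "Suc r"]) simp_all
    qed
    show "poly G (a p) = 0" if "r < p"
      using that p unfolding G_def by (auto simp: poly_prod prod_zero_iff)
  qed
  have "Op_derivs n G (basis_sol j) t
      = (eps j * (t - a j)) powr (1/2 - real (Suc 0)) / (a j - t) ^ n * poly G (a j)"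
    using j Op_derivs_affine_powr_neg_half[OF dG eps_simple[OF j] Delta_simple_pos[OF t j]]
    by (simp add: basis_sol_def)
  moreover have "a j - t \<noteq> 0" using Delta_simple_pos[OF t j] by auto
  ultimately have jth: "Op_derivs n G (basis_sol j) t \<noteq> 0"
    using Delta_simple_pos[OF t j] Gj eps_simple[OF j] by auto
  have "0 = Op n G (sol_comb v 0) t"
    by (rule Op_eq_0_if_vanishing[OF open_I _ t, symmetric]) (use z in auto)
  also have "\<dots> = Op_derivs n G (sol_comb v) t"
    by (rule Op_eq_Op_derivs[OF open_I has_derivs_on_sol_comb _ t]) simp
  also have "\<dots> = (\<Sum>p\<in>{1..n}. v p * Op_derivs n G (basis_sol p) t)"
    unfolding sol_comb_def[abs_def] by (rule Op_derivs_sum)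
  also have "\<dots> = v j * Op_derivs n G (basis_sol j) t"
  proof -
    have "j \<in> {1..n}" using j by simp
    thus ?thesis using sum.remove[of "{1..n}" j "\<lambda>p. v p * Op_derivs n G (basis_sol p) t"] others
      by simp
  qed
  finally show "v j = 0" using jth by simp
qed

text \<open>
  What remains of a vanishing combination is \<open>\<Delta>\<^sub>1 powr (1/2 - r) * P(\<Delta>\<^sub>1)\<close> with the polynomial
  \<open>P = \<Sum>\<^sub>q v\<^sub>q X\<^bsup>r-q\<^esup>\<close>, which has the infinitely many roots \<open>\<Delta>\<^sub>1(I)\<close>.
\<close>

lemma sol_comb_multiple_coeff_eq_0:
  assumes z: "\<forall>t\<in>I. sol_comb v 0 t = 0" and p: "p \<in> {1..r}"
  shows "v p = 0"
proof -
  define D where "D t = eps 1 * (t - a 1)" for t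
  define P where "P = (\<Sum>q\<in>{1..r}. monom (v q) (r - q))"
  have root: "poly P (D t) = 0" if t: "t \<in> I" for t
  proof -
    have Dp: "D t > 0" unfolding D_def using Delta_1_pos[OF t] .
    have "sol_comb v 0 t = (\<Sum>q\<in>{1..r}. v q * basis_sol q 0 t) + (\<Sum>q\<in>{r+1..n}. v q * basis_sol q 0 t)"
      unfolding sol_comb_def split_1n by (rule sum.union_disjoint) auto
    also have "(\<Sum>q\<in>{r+1..n}. v q * basis_sol q 0 t) = 0"
      using sol_comb_simple_coeff_eq_0[OF z] by simp
    also have "(\<Sum>q\<in>{1..r}. v q * basis_sol q 0 t) = (\<Sum>q\<in>{1..r}. v q * D t powr (1/2 - real q))"
      by (intro sum.cong refl) (auto simp: basis_sol_def D_def)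
    finally have s0: "(\<Sum>q\<in>{1..r}. v q * D t powr (1/2 - real q)) = 0" using z t by simp
    have "poly P (D t) = (\<Sum>q\<in>{1..r}. v q * D t ^ (r - q))"
      unfolding P_def by (simp add: poly_sum poly_monom)
    also have "\<dots> = (\<Sum>q\<in>{1..r}. v q * D t powr (1/2 - real q)) * D t powr (real r - 1/2)"
      unfolding sum_distrib_right
    proof (intro sum.cong refl)
      fix q assume q: "q \<in> {1..r}"
      have "D t powr (1/2 - real q) * D t powr (real r - 1/2) = D t powr (real (r - q))"
        using q by (simp add: powr_add[symmetric] of_nat_diff)
      also have "\<dots> = D t ^ (r - q)" using Dp by (simp add: powr_realpow)
      finally show "v q * D t ^ (r - q) = v q * D t powr (1/2 - real q) * D t powr (real r - 1/2)"
        by simp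
    qed
    also have "\<dots> = 0" using s0 by simp
    finally show ?thesis .
  qed
  have "inj_on D I" unfolding D_def inj_on_def using eps_1 by auto
  hence "infinite (D ` I)" using I_infinite finite_imageD by blast
  moreover have "D ` I \<subseteq> {x. poly P x = 0}" using root by auto
  ultimately have "P = 0" using poly_roots_finite finite_subset by blast
  hence "coeff P (r - p) = 0" by simp
  moreover have "coeff P (r - p) = (\<Sum>q\<in>{1..r}. if q = p then v q else 0)"
    unfolding P_def coeff_sum coeff_monom by (intro sum.cong refl) (use p in auto)
  ultimately show "v p = 0" using p by simp
qed

lemma sol_comb_eq_0_imp_coeffs_eq_0:
  assumes "\<forall>t\<in>I. sol_comb v 0 t = 0" "p \<in> {1..n}"
  shows "v p = 0"
  using assms sol_comb_simple_coeff_eq_0 sol_comb_multiple_coeff_eq_0 split_1n by blast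

text \<open>
  The Wronskian matrix of the basis at \<open>t\<^sub>0\<close>; column \<open>j\<close> belongs to the basis solution
  \<open>j + 1\<close>.
\<close>

definition wronskian :: "real \<Rightarrow> real mat" where
  "wronskian t0 = Matrix.mat n n (\<lambda>(i, j). basis_sol (Suc j) i t0)"

lemma wronskian_mult_vec:
  assumes "k < n" "w \<in> carrier_vec n"
  shows "(wronskian t0 *\<^sub>v w) $ k = sol_comb (\<lambda>p. w $ (p - 1)) k t0"
proof -
  have "(wronskian t0 *\<^sub>v w) $ k = (\<Sum>j\<in>{0..<n}. basis_sol (Suc j) k t0 * w $ j)"
    using assms unfolding wronskian_def by (simp add: scalar_prod_def)
  also have "\<dots> = (\<Sum>p\<in>{1..n}. w $ (p - 1) * basis_sol p k t0)"
    by (rule sum.reindex_bij_witness[where i="\<lambda>p. p - 1" and j="Suc"]) auto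
  finally show ?thesis unfolding sol_comb_def .
qed

lemma sol_comb_initial_values_eq_0:
  assumes t0: "t0 \<in> I" and init: "\<forall>k<n. sol_comb v k t0 = 0" and t: "t \<in> I"
  shows "sol_comb v 0 t = 0"
proof (rule Op_F_unique[OF _ _ t0 _ t])
  show "ndiff_on n (sol_comb v 0) I"
    by (rule has_derivs_on_imp_ndiff_on[OF open_I has_derivs_on_sol_comb]) simp
  show "\<forall>t\<in>I. Op n F (sol_comb v 0) t = 0" using Op_sol_comb by blast
  show "\<forall>k<n. (deriv ^^ k) (sol_comb v 0) t0 = 0"
    using has_derivs_on_iter_deriv[OF open_I has_derivs_on_sol_comb _ t0] init by simp
qed

lemma wronskian_det_nonzero:
  assumes t0: "t0 \<in> I"
  shows "Determinant.det (wronskian t0) \<noteq> 0"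
proof
  have A: "wronskian t0 \<in> carrier_mat n n" unfolding wronskian_def by simp
  assume "Determinant.det (wronskian t0) = 0"
  then obtain w where w: "w \<in> carrier_vec n" "w \<noteq> 0\<^sub>v n" "wronskian t0 *\<^sub>v w = 0\<^sub>v n"
    using det_0_iff_vec_prod_zero[OF A] by blast
  have "\<forall>k<n. sol_comb (\<lambda>p. w $ (p - 1)) k t0 = 0"
    using wronskian_mult_vec[OF _ w(1)] w(3) by (metis index_zero_vec(1))
  hence z: "\<forall>t\<in>I. sol_comb (\<lambda>p. w $ (p - 1)) 0 t = 0"
    using sol_comb_initial_values_eq_0[OF t0] by blast
  have "w $ i = 0" if "i < n" for i
    using sol_comb_eq_0_imp_coeffs_eq_0[OF z, of "Suc i"] that by simp
  hence "w = 0\<^sub>v n" using w(1) by (intro eq_vecI) auto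
  with w(2) show False ..
qed

lemma solution_in_span:
  assumes nd: "ndiff_on n x I" and ode: "\<forall>t\<in>I. Op n F x t = 0"
  shows "\<exists>v. \<forall>t\<in>I. x t = sol_comb v 0 t"
proof -
  obtain t0 where t0: "t0 \<in> I" using I_nonempty by auto
  define A where "A = wronskian t0"
  have A: "A \<in> carrier_mat n n" unfolding A_def wronskian_def by simp
  obtain B where B: "B \<in> carrier_mat n n" "A * B = 1\<^sub>m n"
    using det_non_zero_imp_unit[OF A wronskian_det_nonzero[OF t0, folded A_def]]
    unfolding Units_def ring_mat_def by auto
  define d where "d = Matrix.vec n (\<lambda>k. (deriv ^^ k) x t0)"
  define w where "w = B *\<^sub>v d"
  have dc: "d \<in> carrier_vec n" unfolding d_def by simp
  have wc: "w \<in> carrier_vec n" unfolding w_def using B(1) dc by simp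
  have Aw: "A *\<^sub>v w = d"
    unfolding w_def using assoc_mult_mat_vec[OF A B(1) dc, symmetric] B(2) dc by simp
  let ?h = "sol_comb (\<lambda>p. w $ (p - 1)) 0"
  have nh: "ndiff_on n ?h I"
    by (rule has_derivs_on_imp_ndiff_on[OF open_I has_derivs_on_sol_comb]) simp
  have "x t - ?h t = 0" if t: "t \<in> I" for t
  proof (rule Op_F_unique[OF ndiff_on_diff[OF open_I nd nh] _ t0 _ t])
    show "\<forall>t\<in>I. Op n F (\<lambda>t. x t - ?h t) t = 0"
      using Op_diff[OF open_I nd nh] ode Op_sol_comb by simp
    show "\<forall>k<n. (deriv ^^ k) (\<lambda>t. x t - ?h t) t0 = 0"
    proof (intro allI impI)
      fix k assume k: "k < n"
      have "(deriv ^^ k) ?h t0 = sol_comb (\<lambda>p. w $ (p - 1)) k t0"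
        by (rule has_derivs_on_iter_deriv[OF open_I has_derivs_on_sol_comb _ t0]) simp
      also have "\<dots> = (deriv ^^ k) x t0"
        using wronskian_mult_vec[OF k wc, of t0] Aw k unfolding A_def d_def by simp
      finally show "(deriv ^^ k) (\<lambda>t. x t - ?h t) t0 = 0"
        using iter_deriv_diff[OF open_I nd nh _ t0] k by simp
    qed
  qed
  thus ?thesis by auto
qed

lemma homogeneous_solutions:
  "(ndiff_on n x I \<and> (\<forall>t\<in>I. Op n F x t = 0)) \<longleftrightarrow> (\<exists>\<mu> \<xi>. \<forall>t\<in>I. x t = hom_sol r n a eps \<mu> \<xi> t)"
proof
  assume "ndiff_on n x I \<and> (\<forall>t\<in>I. Op n F x t = 0)"
  then obtain v where "\<forall>t\<in>I. x t = sol_comb v 0 t" using solution_in_span by blast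
  hence "\<forall>t\<in>I. x t = hom_sol r n a eps v v t" using hom_sol_eq_sol_comb[of _ v v] by simp
  thus "\<exists>\<mu> \<xi>. \<forall>t\<in>I. x t = hom_sol r n a eps \<mu> \<xi> t" by blast
next
  assume "\<exists>\<mu> \<xi>. \<forall>t\<in>I. x t = hom_sol r n a eps \<mu> \<xi> t"
  then obtain \<mu> \<xi> where h: "\<forall>t\<in>I. x t = hom_sol r n a eps \<mu> \<xi> t" by blast
  have x: "\<And>t. t \<in> I \<Longrightarrow> x t = sol_comb (\<lambda>p. if p \<le> r then \<mu> p else \<xi> p) 0 t"
    using h hom_sol_eq_sol_comb by simp
  show "ndiff_on n x I \<and> (\<forall>t\<in>I. Op n F x t = 0)"
    using has_derivs_on_imp_ndiff_on[OF open_I has_derivs_on_sol_comb x] Op_sol_comb[OF _ x] by blast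
qed

definition affine_derivs :: "real \<Rightarrow> real \<Rightarrow> nat \<Rightarrow> real \<Rightarrow> real" where
  "affine_derivs \<alpha> c k t = (if k = 0 then \<alpha> * t + c else if k = 1 then \<alpha> else 0)"

lemma Op_derivs_affine:
  "Op_derivs n F (affine_derivs (\<nu> / 2) c) t = (real n + 1/2) * \<nu> * t + c + \<nu> * coeff F (n - 1)"
proof -
  define g where "g s = poly ((pderiv ^^ (n - s)) F) t / fact (n - s) * (1 / pochhammer (1/2) s)
                          * affine_derivs (\<nu> / 2) c s t" for s
  have "Op_derivs n F (affine_derivs (\<nu> / 2) c) t = (\<Sum>s=0..n. g s)"
    unfolding Op_derivs_def g_def ..
  also have "\<dots> = (\<Sum>s\<in>{0..1}. g s)"
    by (rule sum.mono_neutral_right) (use one_le_n in \<open>auto simp: g_def affine_derivs_def\<close>)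
  also have "\<dots> = g 0 + g 1" by simp
  also have "g 0 = \<nu> / 2 * t + c"
    unfolding g_def affine_derivs_def
    using poly_top_higher_pderivs(1)[OF F_degree one_le_n, of t] F_monic by simp
  also have "g 1 = (coeff F (n - 1) + real n * t) * \<nu>"
  proof -
    have "poly ((pderiv ^^ (n - 1)) F) t / fact (n - 1) = coeff F (n - 1) + real n * t"
      using poly_top_higher_pderivs(2)[OF F_degree one_le_n, of t] F_monic one_le_n
      by (simp add: field_simps fact_reduce[of n])
    thus ?thesis unfolding g_def affine_derivs_def by simp
  qed
  finally show ?thesis by (simp add: algebra_simps)
qed

lemma inhomogeneous_solutions:
  "\<exists>c. \<forall>x. (ndiff_on n x I \<and> (\<forall>t\<in>I. Op n F x t = (real n + 1/2) * \<nu> * t + \<beta>))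
            \<longleftrightarrow> (\<exists>\<mu> \<xi>. \<forall>t\<in>I. x t = hom_sol r n a eps \<mu> \<xi> t + \<nu> / 2 * t + c)"
proof (intro exI allI)
  define c where "c = \<beta> - \<nu> * coeff F (n - 1)"
  let ?L = "affine_derivs (\<nu> / 2) c"
  have L: "has_derivs_on I ?L"
    unfolding affine_derivs_def[abs_def] by (rule has_derivs_on_affine)
  have nL: "ndiff_on n (?L 0) I" by (rule has_derivs_on_imp_ndiff_on[OF open_I L]) simp
  have OL: "Op n F (?L 0) t = (real n + 1/2) * \<nu> * t + \<beta>" if "t \<in> I" for t
    using Op_eq_Op_derivs[OF open_I L _ that, of "?L 0"] Op_derivs_affine unfolding c_def by simp
  fix x
  show "(ndiff_on n x I \<and> (\<forall>t\<in>I. Op n F x t = (real n + 1/2) * \<nu> * t + \<beta>))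
            \<longleftrightarrow> (\<exists>\<mu> \<xi>. \<forall>t\<in>I. x t = hom_sol r n a eps \<mu> \<xi> t + \<nu> / 2 * t + c)"
  proof
    assume h: "ndiff_on n x I \<and> (\<forall>t\<in>I. Op n F x t = (real n + 1/2) * \<nu> * t + \<beta>)"
    hence "ndiff_on n (\<lambda>t. x t - ?L 0 t) I \<and> (\<forall>t\<in>I. Op n F (\<lambda>t. x t - ?L 0 t) t = 0)"
      using ndiff_on_diff[OF open_I _ nL] Op_diff[OF open_I _ nL] OL by simp
    then obtain \<mu> \<xi> where "\<forall>t\<in>I. x t - ?L 0 t = hom_sol r n a eps \<mu> \<xi> t"
      using homogeneous_solutions[of "\<lambda>t. x t - ?L 0 t"] by blast
    hence "\<forall>t\<in>I. x t = hom_sol r n a eps \<mu> \<xi> t + \<nu> / 2 * t + c"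
      unfolding affine_derivs_def by auto
    thus "\<exists>\<mu> \<xi>. \<forall>t\<in>I. x t = hom_sol r n a eps \<mu> \<xi> t + \<nu> / 2 * t + c" by blast
  next
    assume "\<exists>\<mu> \<xi>. \<forall>t\<in>I. x t = hom_sol r n a eps \<mu> \<xi> t + \<nu> / 2 * t + c"
    then obtain \<mu> \<xi> where h: "\<forall>t\<in>I. x t = hom_sol r n a eps \<mu> \<xi> t + \<nu> / 2 * t + c" by blast
    let ?w = "\<lambda>p. if p \<le> r then \<mu> p else \<xi> p"
    let ?f = "\<lambda>k t. sol_comb ?w k t + ?L k t"
    have f: "has_derivs_on I ?f" by (rule has_derivs_on_add[OF has_derivs_on_sol_comb L])
    have x: "\<And>t. t \<in> I \<Longrightarrow> x t = ?f 0 t"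
      using h hom_sol_eq_sol_comb by (simp add: affine_derivs_def)
    have "Op n F x t = (real n + 1/2) * \<nu> * t + \<beta>" if t: "t \<in> I" for t
    proof -
      have "Op n F x t = Op_derivs n F ?f t" by (rule Op_eq_Op_derivs[OF open_I f x t])
      also have "\<dots> = Op_derivs n F (sol_comb ?w) t + Op_derivs n F ?L t" by (rule Op_derivs_add)
      also have "Op_derivs n F (sol_comb ?w) t = 0"
        using Op_sol_comb[OF t, of "sol_comb ?w 0"] Op_eq_Op_derivs[OF open_I has_derivs_on_sol_comb _ t]
        by simp
      finally show ?thesis unfolding Op_derivs_affine c_def by simp
    qed
    thus "ndiff_on n x I \<and> (\<forall>t\<in>I. Op n F x t = (real n + 1/2) * \<nu> * t + \<beta>)"
      using has_derivs_on_imp_ndiff_on[OF open_I f x] by blast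
  qed
qed

end

theorem proposition31:
  fixes r n :: nat and a eps :: "nat \<Rightarrow> real" and I :: "real set"
  assumes "2 \<le> r" and "r \<le> n"
    and "inj_on a ({1} \<union> {r+1..n})"
    and "\<forall>i\<in>{1} \<union> {r+1..n}. eps i = 1 \<or> eps i = -1"
    and "open I" and "is_interval I" and "I \<noteq> {}"
    and "\<forall>t\<in>I. \<forall>i\<in>{1} \<union> {r+1..n}. eps i * (t - a i) > 0"
  shows "(\<forall>x. (ndiff_on n x I \<and> (\<forall>t\<in>I. Op n (Fpoly r n a) x t = 0))
               \<longleftrightarrow> (\<exists>\<mu> \<xi>. \<forall>t\<in>I. x t = hom_sol r n a eps \<mu> \<xi> t))
       \<and> (\<forall>\<nu> \<beta> :: real. \<exists>c :: real. \<forall>x.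
            (ndiff_on n x I \<and> (\<forall>t\<in>I. Op n (Fpoly r n a) x t = (real n + 1/2) * \<nu> * t + \<beta>))
            \<longleftrightarrow> (\<exists>\<mu> \<xi>. \<forall>t\<in>I. x t = hom_sol r n a eps \<mu> \<xi> t + \<nu> / 2 * t + c))"
proof -
  interpret Fpoly_setting r n a eps I using assms by unfold_locales
  show ?thesis using homogeneous_solutions inhomogeneous_solutions unfolding F_def by blast
qed

end
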